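(* Let $X$ be a random variable with survival function $\overline{F}(x) = \mathbb{P}(X>x)$ given by $\overline{F}(x) = 1$ for $x < 2$ and $\overline{F}(x) = 2^{-\lfloor \log_2 x \rfloor}$ for $x \geq 2$ (i.e. $\mathbb{P}(X = 2^m) = 2^{-m}$ for $m \in \mathbb{N} = \{1,2,\dots\}$, the St. Petersburg lottery). For $n \geq 2$ let $X_1, \dots, X_n$ be i.i.d. copies of $X$ and $\overline{X}_n = \frac{1}{n}\sum_{i=1}^n X_i$. Then $X \leq_{\mathrm{st}} \overline{X}_n$ for all $n \in \{2^k : k \in \mathbb{N}\}$.
   Context: For random variables $X, Y$, $X \leq_{\mathrm{st}} Y$ means $\mathbb{P}(X > x) \leq \mathbb{P}(Y > x)$ for all $x \in \mathbb{R}$. *)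

theory Defs
  imports "HOL-Probability.Probability"
begin

definition stpete_surv :: "real \<Rightarrow> real" where
  "stpete_surv x = (if x < 2 then 1 else 2 powr (- real_of_int \<lfloor>log 2 x\<rfloor>))"

definition stoch_le :: "'a measure \<Rightarrow> ('a \<Rightarrow> real) \<Rightarrow> ('a \<Rightarrow> real) \<Rightarrow> bool" where
  "stoch_le M X Y \<longleftrightarrow>
     (\<forall>x::real. measure M {\<omega> \<in> space M. X \<omega> > x} \<le> measure M {\<omega> \<in> space M. Y \<omega> > x})"

end

theory Submission
  imports Defs
begin

text \<open>
  Let \<open>\<phi>(a, a) = a\<close> and \<open>\<phi>(a, b) = max a b / 2\<close> for \<open>a \<noteq> b\<close>, so that \<open>\<phi>(a, b) \<le> (a + b) / 2\<close>
  on positive arguments. For independent St. Petersburg variables \<open>A, B\<close> and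
  \<open>2^m \<le> x < 2^(m+1)\<close>, almost surely \<open>\<phi>(A, B) > x\<close> exactly when \<open>A > 2^(m+1)\<close> or
  \<open>B > 2^(m+1)\<close> or \<open>A = B = 2^(m+1)\<close>; with \<open>p = 2^-(m+1)\<close> this has probability
  \<open>(2p - p\<^sup>2) + p\<^sup>2 = 2^-m\<close>, so \<open>\<phi>(A, B)\<close> is again St. Petersburg. Applying \<open>\<phi>\<close> along a
  complete binary tree to \<open>2^k\<close> independent copies gives a St. Petersburg variable that is
  bounded by their mean, hence the tail of the mean dominates that of \<open>X\<close>.
\<close>

lemma stpete_surv_dyadic:
  fixes m :: nat and x :: real
  assumes "2 ^ m \<le> x" "x < 2 ^ (m + 1)"
  shows "stpete_surv x = 1 / 2 ^ m"
proof -
  have "x > 0" using assms(1) zero_less_power[of "2::real" m] by linarith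
  then have "\<lfloor>log 2 x\<rfloor> = int m"
    using assms by (subst floor_log_eq_powr_iff) (auto simp: powr_realpow powr_add)
  moreover have "m = 0" if "x < 2"
  proof -
    have "(2::real) ^ m < 2 ^ 1" using assms(1) that by simp
    then show ?thesis using power_strict_increasing_iff[of "2::real" m 1] by simp
  qed
  ultimately show ?thesis
    by (auto simp: stpete_surv_def powr_minus powr_realpow divide_inverse)
qed

lemma ex_dyadic_interval:
  fixes x :: real
  assumes "1 \<le> x"
  shows "\<exists>m::nat. 2 ^ m \<le> x \<and> x < 2 ^ (m + 1)"
proof -
  have "\<lfloor>log 2 x\<rfloor> = int (nat \<lfloor>log 2 x\<rfloor>)" using assms by simp
  then have "2 powr real (nat \<lfloor>log 2 x\<rfloor>) \<le> x \<and> x < 2 powr (real (nat \<lfloor>log 2 x\<rfloor>) + 1)"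
    using assms by (subst (asm) floor_log_eq_powr_iff) auto
  then show ?thesis by (auto simp: powr_add powr_realpow)
qed

lemma stpete_surv_power2: "stpete_surv (2 ^ m) = 1 / 2 ^ m"
  by (rule stpete_surv_dyadic) auto

text \<open>The \<open>min\<close> is inactive for positive arguments; it makes \<open>dyadic_merge_le_mean\<close> unconditional.\<close>
definition dyadic_merge :: "real \<Rightarrow> real \<Rightarrow> real" where
  "dyadic_merge a b = (if a = b then a else min ((a + b) / 2) (max a b / 2))"

lemma dyadic_merge_le_mean: "dyadic_merge a b \<le> (a + b) / 2"
  unfolding dyadic_merge_def using min.cobounded1[of "(a + b) / 2" "max a b / 2"] by auto

lemma dyadic_merge_power2:
  fixes a b :: nat
  shows "dyadic_merge (2 ^ a) (2 ^ b) = 2 ^ (if a = b then a else max a b - 1)"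
proof (cases "a = b")
  case False
  then have "max a b = Suc (max a b - 1)" by linarith
  then have "(2::real) ^ max a b = 2 * 2 ^ (max a b - 1)" by (metis power_Suc)
  moreover have "(2::real) ^ max a b = max (2 ^ a) (2 ^ b)"
    by (simp add: max_def)
  moreover have "max ((2::real) ^ a) (2 ^ b) \<le> 2 ^ a + 2 ^ b" by simp
  ultimately show ?thesis using False by (simp add: dyadic_merge_def min_def)
qed (simp add: dyadic_merge_def)

lemma dyadic_merge_power2_gt_iff:
  fixes a b m :: nat and x :: real
  assumes "2 ^ m \<le> x" "x < 2 ^ (m + 1)"
  shows "x < dyadic_merge (2 ^ a) (2 ^ b) \<longleftrightarrow>
    2 ^ (m + 1) < (2::real) ^ a \<or> 2 ^ (m + 1) < (2::real) ^ b \<or>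
    ((2::real) ^ a \<in> {2 ^ m<..2 ^ (m + 1)} \<and> (2::real) ^ b \<in> {2 ^ m<..2 ^ (m + 1)})"
proof -
  have "x < 2 ^ e \<longleftrightarrow> m < e" for e :: nat
  proof
    assume "x < 2 ^ e"
    then have "(2::real) ^ m < 2 ^ e" using assms(1) by linarith
    then show "m < e" by simp
  next
    assume "m < e"
    then have "(2::real) ^ (m + 1) \<le> 2 ^ e" by (intro power_increasing) auto
    then show "x < 2 ^ e" using assms(2) by linarith
  qed
  moreover have "(2::real) ^ (m + 1) < 2 ^ c \<longleftrightarrow> m + 1 < c" for c :: nat
    by (rule power_strict_increasing_iff) simp
  moreover have "(2::real) ^ c \<in> {2 ^ m<..2 ^ (m + 1)} \<longleftrightarrow> c = m + 1" for c :: nat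
    by (auto simp del: power_Suc)
  moreover have "m < (if a = b then a else max a b - 1) \<longleftrightarrow>
      m + 1 < a \<or> m + 1 < b \<or> (a = m + 1 \<and> b = m + 1)"
    by auto
  ultimately show ?thesis
    unfolding dyadic_merge_power2 by presburger
qed

lemma borel_measurable_dyadic_merge [measurable]:
  assumes [measurable]: "f \<in> borel_measurable N" "g \<in> borel_measurable N"
  shows "(\<lambda>x. dyadic_merge (f x) (g x)) \<in> borel_measurable N"
  unfolding dyadic_merge_def by measurable

fun merge_tree :: "nat \<Rightarrow> nat \<Rightarrow> (nat \<Rightarrow> real) \<Rightarrow> real" where
  "merge_tree 0 s f = f s"
| "merge_tree (Suc k) s f = dyadic_merge (merge_tree k s f) (merge_tree k (s + 2 ^ k) f)"

lemma merge_tree_le_mean: "merge_tree k s f \<le> (\<Sum>i = s..<s + 2 ^ k. f i) / 2 ^ k"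
proof (induction k arbitrary: s)
  case (Suc k)
  let ?a = "merge_tree k s f" and ?b = "merge_tree k (s + 2 ^ k) f"
  have "2 ^ Suc k * merge_tree (Suc k) s f \<le> 2 ^ k * (?a + ?b)"
    using dyadic_merge_le_mean[of ?a ?b] by simp
  also have "\<dots> \<le> (\<Sum>i = s..<s + 2 ^ k. f i) + (\<Sum>i = s + 2 ^ k..<s + 2 ^ k + 2 ^ k. f i)"
    using Suc.IH[of s] Suc.IH[of "s + 2 ^ k"] by (simp add: field_simps)
  also have "\<dots> = (\<Sum>i = s..<s + 2 ^ Suc k. f i)"
    by (subst sum.union_disjoint[symmetric]) (auto intro!: sum.cong)
  finally show ?case by (simp add: field_simps)
qed simp

lemma merge_tree_cong:
  "(\<And>i. i \<in> {s..<s + 2 ^ k} \<Longrightarrow> f i = g i) \<Longrightarrow> merge_tree k s f = merge_tree k s g"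
  by (induction k arbitrary: s) auto

lemma measurable_merge_tree:
  "{s..<s + 2 ^ k} \<subseteq> I \<Longrightarrow> merge_tree k s \<in> borel_measurable (PiM I (\<lambda>_. borel))"
proof (induction k arbitrary: s)
  case 0
  then show ?case by (simp add: measurable_component_singleton)
next
  case (Suc k)
  have "merge_tree k s \<in> borel_measurable (PiM I (\<lambda>_. borel))"
    "merge_tree k (s + 2 ^ k) \<in> borel_measurable (PiM I (\<lambda>_. borel))"
    by (rule Suc.IH, use Suc.prems in auto)+
  then show ?case by simp
qed

definition stpete_rv :: "'a measure \<Rightarrow> ('a \<Rightarrow> real) \<Rightarrow> bool" where
  "stpete_rv M Y \<longleftrightarrow> Y \<in> borel_measurable M \<and>
     (\<forall>x. measure M {\<omega> \<in> space M. Y \<omega> > x} = stpete_surv x)"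

context prob_space
begin

lemma indep_var_prob_Int:
  assumes "indep_var S X T Y" "A \<in> sets S" "B \<in> sets T"
  shows "prob ({\<omega> \<in> space M. X \<omega> \<in> A} \<inter> {\<omega> \<in> space M. Y \<omega> \<in> B}) =
    prob {\<omega> \<in> space M. X \<omega> \<in> A} * prob {\<omega> \<in> space M. Y \<omega> \<in> B}"
proof -
  have "{\<omega> \<in> space M. X \<omega> \<in> A} = X -` A \<inter> space M"
    and "{\<omega> \<in> space M. Y \<omega> \<in> B} = Y -` B \<inter> space M"
    by auto
  with assms show ?thesis
    unfolding indep_var_eq by (auto intro!: indep_setD)
qed

lemma prob_Ioc_eq_diff:
  fixes Y :: "'a \<Rightarrow> real"
  assumes [measurable]: "Y \<in> borel_measurable M" and "a \<le> b"
  shows "prob {\<omega> \<in> space M. Y \<omega> \<in> {a<..b}} =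
    prob {\<omega> \<in> space M. Y \<omega> > a} - prob {\<omega> \<in> space M. Y \<omega> > b}"
proof -
  have "{\<omega> \<in> space M. Y \<omega> \<in> {a<..b}} = {\<omega> \<in> space M. Y \<omega> > a} - {\<omega> \<in> space M. Y \<omega> > b}"
    by auto
  also have "prob \<dots> = prob {\<omega> \<in> space M. Y \<omega> > a} - prob {\<omega> \<in> space M. Y \<omega> > b}"
    using \<open>a \<le> b\<close> by (intro finite_measure_Diff) auto
  finally show ?thesis .
qed

lemma AE_not_between:
  fixes Y :: "'a \<Rightarrow> real"
  assumes [measurable]: "Y \<in> borel_measurable M"
    and flat: "\<And>t. a \<le> t \<Longrightarrow> t < b \<Longrightarrow> prob {\<omega> \<in> space M. Y \<omega> > t} = prob {\<omega> \<in> space M. Y \<omega> > a}"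
  shows "AE \<omega> in M. \<not> (a < Y \<omega> \<and> Y \<omega> < b)"
proof (cases "a < b")
  case True
  have AE_not_le: "AE \<omega> in M. \<not> (a < Y \<omega> \<and> Y \<omega> \<le> t)" if "a \<le> t" "t < b" for t
  proof -
    have "prob {\<omega> \<in> space M. Y \<omega> \<in> {a<..t}} = 0"
      using flat[OF that] by (subst prob_Ioc_eq_diff) (use that in auto)
    then have "AE \<omega> in M. \<omega> \<notin> {\<omega> \<in> space M. a < Y \<omega> \<and> Y \<omega> \<le> t}"
      by (subst prob_eq_0[symmetric]) auto
    then show ?thesis using AE_space by eventually_elim auto
  qed
  have "AE \<omega> in M. \<forall>n. \<not> (a < Y \<omega> \<and> Y \<omega> \<le> max a (b - 1 / Suc n))"
    by (subst AE_all_countable, intro allI AE_not_le) (use True in auto)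
  then show ?thesis
  proof eventually_elim
    case (elim \<omega>)
    show ?case
    proof
      assume between: "a < Y \<omega> \<and> Y \<omega> < b"
      then obtain n where "inverse (real (Suc n)) < b - Y \<omega>"
        using reals_Archimedean[of "b - Y \<omega>"] by auto
      then have "Y \<omega> \<le> max a (b - 1 / Suc n)" by (simp add: inverse_eq_divide)
      with between elim show False by blast
    qed
  qed
qed simp

lemma stpete_rv_AE_power2:
  assumes "stpete_rv M Y"
  shows "AE \<omega> in M. \<exists>j::nat. 1 \<le> j \<and> Y \<omega> = 2 ^ j"
proof -
  have [measurable]: "Y \<in> borel_measurable M"
    and surv: "\<And>x. prob {\<omega> \<in> space M. Y \<omega> > x} = stpete_surv x"
    using assms by (auto simp: stpete_rv_def)
  have "prob {\<omega> \<in> space M. Y \<omega> > 1} = 1"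
    using surv stpete_surv_dyadic[of 0 1] by simp
  then have "AE \<omega> in M. \<omega> \<in> {\<omega> \<in> space M. Y \<omega> > 1}"
    by (subst prob_eq_1[symmetric]) auto
  moreover have "AE \<omega> in M. \<forall>m::nat. \<not> (2 ^ m < Y \<omega> \<and> Y \<omega> < 2 ^ (m + 1))"
  proof (subst AE_all_countable, intro allI AE_not_between)
    fix m :: nat and t :: real
    assume "2 ^ m \<le> t" "t < 2 ^ (m + 1)"
    then show "prob {\<omega> \<in> space M. Y \<omega> > t} = prob {\<omega> \<in> space M. Y \<omega> > 2 ^ m}"
      using stpete_surv_dyadic[of m] by (simp add: surv)
  qed simp
  ultimately show ?thesis
  proof eventually_elim
    case (elim \<omega>)
    then obtain m :: nat where m: "2 ^ m \<le> Y \<omega>" "Y \<omega> < 2 ^ (m + 1)"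
      using ex_dyadic_interval[of "Y \<omega>"] by auto
    moreover have "\<not> 2 ^ m < Y \<omega>" using elim m(2) by blast
    ultimately have "Y \<omega> = 2 ^ m" by linarith
    moreover have "m \<noteq> 0" using elim \<open>Y \<omega> = 2 ^ m\<close> by (cases m) auto
    ultimately show ?case by auto
  qed
qed

lemma stpete_rv_prob_dyadic_interval:
  fixes m :: nat
  assumes "stpete_rv M Y"
  shows "prob {\<omega> \<in> space M. Y \<omega> \<in> {2 ^ m<..2 ^ (m + 1)}} = 1 / 2 ^ (m + 1)"
proof -
  have [measurable]: "Y \<in> borel_measurable M"
    and surv: "\<And>x. prob {\<omega> \<in> space M. Y \<omega> > x} = stpete_surv x"
    using assms by (auto simp: stpete_rv_def)
  have "prob {\<omega> \<in> space M. Y \<omega> \<in> {2 ^ m<..2 ^ (m + 1)}} =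
      stpete_surv (2 ^ m) - stpete_surv (2 ^ (m + 1))"
    by (subst prob_Ioc_eq_diff) (auto simp: surv)
  also have "\<dots> = 1 / 2 ^ (m + 1)"
    using stpete_surv_power2[of m] stpete_surv_power2[of "m + 1"] by simp
  finally show ?thesis .
qed

lemma stpete_rv_dyadic_merge:
  assumes A: "stpete_rv M A" and B: "stpete_rv M B" and indep: "indep_var borel A borel B"
  shows "stpete_rv M (\<lambda>\<omega>. dyadic_merge (A \<omega>) (B \<omega>))"
proof -
  have [measurable]: "A \<in> borel_measurable M" "B \<in> borel_measurable M"
    using A B by (auto simp: stpete_rv_def)
  define Z where "Z \<omega> = dyadic_merge (A \<omega>) (B \<omega>)" for \<omega>
  define ev where "ev X S = {\<omega> \<in> space M. X \<omega> \<in> S}" for X :: "'a \<Rightarrow> real" and S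
  have ev_sets [measurable]: "ev A S \<in> events" "ev B S \<in> events" if "S \<in> sets borel" for S
    using that unfolding ev_def by measurable
  have dyadic: "prob {\<omega> \<in> space M. Z \<omega> > x} = stpete_surv x"
    if x: "2 ^ m \<le> x" "x < 2 ^ (m + 1)" for m :: nat and x :: real
  proof -
    define G where "G = {(2::real) ^ (m + 1)<..}"
    define I where "I = {(2::real) ^ m<..2 ^ (m + 1)}"
    define p :: real where "p = 1 / 2 ^ (m + 1)"
    have [measurable]: "G \<in> sets borel" "I \<in> sets borel" by (simp_all add: G_def I_def)
    have G: "prob (ev A G) = p" "prob (ev B G) = p"
      using A B stpete_surv_power2[of "m + 1"] by (auto simp: stpete_rv_def ev_def G_def p_def)
    have I: "prob (ev A I) = p" "prob (ev B I) = p"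
      using stpete_rv_prob_dyadic_interval[OF A] stpete_rv_prob_dyadic_interval[OF B]
      by (simp_all add: ev_def I_def p_def)
    have "prob {\<omega> \<in> space M. Z \<omega> > x} = prob ((ev A G \<union> ev B G) \<union> (ev A I \<inter> ev B I))"
    proof (rule finite_measure_eq_AE)
      show "AE \<omega> in M. \<omega> \<in> {\<omega> \<in> space M. Z \<omega> > x} \<longleftrightarrow>
          \<omega> \<in> (ev A G \<union> ev B G) \<union> (ev A I \<inter> ev B I)"
        using stpete_rv_AE_power2[OF A] stpete_rv_AE_power2[OF B] AE_space
      proof eventually_elim
        case (elim \<omega>)
        then show ?case
          using dyadic_merge_power2_gt_iff[OF x] by (auto simp: Z_def ev_def G_def I_def)
      qed
    qed (auto simp: Z_def)
    also have "\<dots> = prob (ev A G \<union> ev B G) + prob (ev A I \<inter> ev B I)"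
      by (rule finite_measure_Union) (auto simp: ev_def G_def I_def)
    also have "prob (ev A G \<union> ev B G) = prob (ev A G) + prob (ev B G) - prob (ev A G \<inter> ev B G)"
      by (rule measure_Un3) (simp_all add: fmeasurable_eq_sets)
    also have "\<dots> + prob (ev A I \<inter> ev B I) = 2 * p"
      using indep_var_prob_Int[OF indep] G I by (simp add: ev_def)
    also have "2 * p = stpete_surv x"
      using stpete_surv_dyadic[OF x] by (simp add: p_def)
    finally show ?thesis .
  qed
  have "prob {\<omega> \<in> space M. Z \<omega> > x} = stpete_surv x" for x
  proof (cases "1 \<le> x")
    case True
    then show ?thesis using ex_dyadic_interval dyadic by blast
  next
    case False
    have "1 = prob {\<omega> \<in> space M. Z \<omega> > 1}"
      using dyadic[of 0 1] stpete_surv_power2[of 0] by simp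
    also have "\<dots> \<le> prob {\<omega> \<in> space M. Z \<omega> > x}"
      using False by (intro finite_measure_mono) (auto simp: Z_def)
    finally have "prob {\<omega> \<in> space M. Z \<omega> > x} = 1"
      using prob_le_1 by (intro antisym) auto
    then show ?thesis using False by (simp add: stpete_surv_def)
  qed
  then show ?thesis by (simp add: stpete_rv_def Z_def)
qed

lemma stpete_rv_merge_tree:
  assumes "indep_vars (\<lambda>_. borel) Y {s..<s + 2 ^ k}"
    and "\<And>i. i \<in> {s..<s + 2 ^ k} \<Longrightarrow> stpete_rv M (Y i)"
  shows "stpete_rv M (\<lambda>\<omega>. merge_tree k s (\<lambda>i. Y i \<omega>))"
  using assms
proof (induction k arbitrary: s)
  case (Suc k)
  define L where "L = {s..<s + 2 ^ k}"
  define R where "R = {s + 2 ^ k..<s + 2 ^ k + 2 ^ k}"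
  have halves: "L \<subseteq> {s..<s + 2 ^ Suc k}" "R \<subseteq> {s..<s + 2 ^ Suc k}" "L \<inter> R = {}"
    by (auto simp: L_def R_def)
  have "indep_var (PiM L (\<lambda>_. borel)) (\<lambda>\<omega>. restrict (\<lambda>i. Y i \<omega>) L)
      (PiM R (\<lambda>_. borel)) (\<lambda>\<omega>. restrict (\<lambda>i. Y i \<omega>) R)"
    using halves by (intro indep_var_restrict[OF Suc.prems(1)]) auto
  then have "indep_var borel (merge_tree k s \<circ> (\<lambda>\<omega>. restrict (\<lambda>i. Y i \<omega>) L))
      borel (merge_tree k (s + 2 ^ k) \<circ> (\<lambda>\<omega>. restrict (\<lambda>i. Y i \<omega>) R))"
    by (rule indep_var_compose) (auto simp: L_def R_def intro!: measurable_merge_tree)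
  also have "merge_tree k s \<circ> (\<lambda>\<omega>. restrict (\<lambda>i. Y i \<omega>) L) = (\<lambda>\<omega>. merge_tree k s (\<lambda>i. Y i \<omega>))"
    unfolding comp_def L_def by (intro ext merge_tree_cong) simp
  also have "merge_tree k (s + 2 ^ k) \<circ> (\<lambda>\<omega>. restrict (\<lambda>i. Y i \<omega>) R) =
      (\<lambda>\<omega>. merge_tree k (s + 2 ^ k) (\<lambda>i. Y i \<omega>))"
    unfolding comp_def R_def by (intro ext merge_tree_cong) simp
  finally have indep: "indep_var borel (\<lambda>\<omega>. merge_tree k s (\<lambda>i. Y i \<omega>))
      borel (\<lambda>\<omega>. merge_tree k (s + 2 ^ k) (\<lambda>i. Y i \<omega>))" .
  have "stpete_rv M (\<lambda>\<omega>. merge_tree k s (\<lambda>i. Y i \<omega>))"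
    using Suc.prems halves(1) by (intro Suc.IH) (auto simp: L_def intro: indep_vars_subset)
  moreover have "stpete_rv M (\<lambda>\<omega>. merge_tree k (s + 2 ^ k) (\<lambda>i. Y i \<omega>))"
    using Suc.prems halves(2) by (intro Suc.IH) (auto simp: R_def intro: indep_vars_subset)
  ultimately show ?case
    using stpete_rv_dyadic_merge indep by simp
qed simp

end

theorem proposition3:
  fixes M :: "'a measure" and X :: "'a \<Rightarrow> real" and Xs :: "nat \<Rightarrow> 'a \<Rightarrow> real"
    and k :: nat
  assumes "prob_space M"
    and "X \<in> borel_measurable M"
    and "\<And>x. measure M {\<omega> \<in> space M. X \<omega> > x} = stpete_surv x"
    and "k \<ge> 1"
    and "\<And>i. i < 2 ^ k \<Longrightarrow> Xs i \<in> borel_measurable M"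
    and "prob_space.indep_vars M (\<lambda>_. borel) Xs {..<2 ^ k}"
    and "\<And>i x. i < 2 ^ k \<Longrightarrow> measure M {\<omega> \<in> space M. Xs i \<omega> > x} = stpete_surv x"
  shows "stoch_le M X (\<lambda>\<omega>. (\<Sum>i<2 ^ k. Xs i \<omega>) / real (2 ^ k))"
proof -
  interpret prob_space M by fact
  have "stpete_rv M (\<lambda>\<omega>. merge_tree k 0 (\<lambda>i. Xs i \<omega>))"
    using assms(5-7) by (intro stpete_rv_merge_tree) (auto simp: stpete_rv_def atLeast0LessThan)
  then have X_eq_tree: "prob {\<omega> \<in> space M. X \<omega> > x} =
      prob {\<omega> \<in> space M. merge_tree k 0 (\<lambda>i. Xs i \<omega>) > x}" for x
    using assms(3) by (simp add: stpete_rv_def)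
  have tree_le_mean: "merge_tree k 0 (\<lambda>i. Xs i \<omega>) \<le> (\<Sum>i<2 ^ k. Xs i \<omega>) / real (2 ^ k)" for \<omega>
    using merge_tree_le_mean[of k 0] by (simp add: atLeast0LessThan)
  have [measurable]: "Xs i \<in> borel_measurable M" if "i < 2 ^ k" for i
    using assms(5) that .
  show ?thesis
    unfolding stoch_le_def X_eq_tree
    using tree_le_mean by (intro allI finite_measure_mono) (auto intro: order.strict_trans2)
qed

end
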